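(* Let $f:\Omega\to\mathbb{C}$ be smooth and let $\hat\Phi=(\Phi_1,\dots,\Phi_m)$ with $\Phi_j:\partial\Omega\to\mathbb{C}$ be given. Let $G$ be the Green function $G(x,x')=E(x,x')-\int_{\partial\Omega}dS(\bar x)E(x,\bar x)(\hat B^{a\dagger}\hat{\mathbf g}^{-1}\hat B\bar E_{x'})(\bar x)$, where $g_{ij}(\bar x,\bar x')=\iint dS(\bar x_1)dS(\bar x_2)\,b_i(\bar x,\bar x_1)E(\bar x_1,\bar x_2)\overline{b^a_j(\bar x',\bar x_2)}$ and $\hat{\mathbf g}$ is assumed invertible. Define $J_{\hat\Phi}=\hat B^{a\dagger}\hat{\mathbf g}^{-1}\hat\Phi$ and $$u(x)=\int_\Omega dV(x_1)\,G(x,x_1)f(x_1)+\int_{\partial\Omega}dS(\bar x)\,E(x,\bar x)\,J_{\hat\Phi}(\bar x).$$ Then $\mathfrak L u=f$ in $\Omega$ and the restriction $\bar u$ of $u$ to $\partial\Omega$ satisfies the inhomogeneous nonlocal boundary conditions $\int_{\partial\Omega}dS(\bar x_1)\,b_j(\bar x,\bar x_1)u(\bar x_1)=\Phi_j(\bar x)$ for all $\bar x\in\partial\Omega$, $j=1,\dots,m$ (i.e. $\hat B\bar u=\hat\Phi$).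
   Context: $\Omega\subset\mathbb{R}^n$ is a domain with boundary $\partial\Omega$, surface measure $dS$, volume measure $dV$. $\mathfrak L$ is a linear differential operator on $\mathbb{R}^n$ with fundamental solution $E$ ($\mathfrak L_xE(x,x')=\delta(x-x')$ on $\mathbb{R}^n$). $\hat B$ and $\hat B^a$ are boundary operators with kernels $b_j$, $b^a_j$ ($j=1,\dots,m$) acting by $(\hat B\varphi)_j(\bar x)=\int_{\partial\Omega}dS(\bar x_1)b_j(\bar x,\bar x_1)\varphi(\bar x_1)$, with adjoint $(\hat B^\dagger\psi)(\bar x)=\sum_j\int_{\partial\Omega}dS(\bar x_1)\overline{b_j(\bar x_1,\bar x)}\psi_j(\bar x_1)$. Matrix operators act by $(\hat{\mathbf g}\psi)_i(\bar x)=\sum_j\int dS(\bar x')g_{ij}(\bar x,\bar x')\psi_j(\bar x')$. $\bar E_{x'}$ is the restriction of $E(\cdot,x')$ to $\partial\Omega$. Standing assumptions: integrals converge and may be interchanged, restrictions to the boundary exist, and $\mathfrak L$ may be applied under the integral signs at interior points. *)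

theory Defs
  imports "HOL-Analysis.Analysis"
begin

(* Points of R^n are  real ^ 'n.  Boundary kernels are indexed by j :: nat, j = 1..m. *)

fun iter_dderiv :: "('a::real_normed_vector) list \<Rightarrow> ('a \<Rightarrow> complex) \<Rightarrow> 'a \<Rightarrow> complex" where
  "iter_dderiv [] f = f"
| "iter_dderiv (v # vs) f = (\<lambda>x. frechet_derivative (iter_dderiv vs f) (at x) v)"

definition smooth_fun_on :: "('a::real_normed_vector) set \<Rightarrow> ('a \<Rightarrow> complex) \<Rightarrow> bool" where
  "smooth_fun_on \<Omega> f \<longleftrightarrow> (\<forall>vs. \<forall>x\<in>\<Omega>. iter_dderiv vs f differentiable (at x))"

definition lin_diff_op ::
  "('a::topological_space) set \<Rightarrow> ('a \<Rightarrow> complex) set \<Rightarrow> (('a \<Rightarrow> complex) \<Rightarrow> ('a \<Rightarrow> complex)) \<Rightarrow> bool" where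
  "lin_diff_op \<Omega> D L \<longleftrightarrow>
     (\<forall>\<phi>\<in>D. \<forall>\<psi>\<in>D. (\<lambda>y. \<phi> y + \<psi> y) \<in> D \<and> (\<forall>x\<in>\<Omega>. L (\<lambda>y. \<phi> y + \<psi> y) x = L \<phi> x + L \<psi> x)) \<and>
     (\<forall>c. \<forall>\<phi>\<in>D. (\<lambda>y. c * \<phi> y) \<in> D \<and> (\<forall>x\<in>\<Omega>. L (\<lambda>y. c * \<phi> y) x = c * L \<phi> x)) \<and>
     (\<forall>\<phi> \<psi>. \<forall>x\<in>\<Omega>. (\<forall>\<^sub>F y in nhds x. \<phi> y = \<psi> y) \<longrightarrow> L \<phi> x = L \<psi> x)"

definition bop :: "'a measure \<Rightarrow> (nat \<Rightarrow> 'a \<Rightarrow> 'a \<Rightarrow> complex) \<Rightarrow> ('a \<Rightarrow> complex) \<Rightarrow> nat \<Rightarrow> 'a \<Rightarrow> complex" where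
  "bop S b \<phi> j xb = (\<integral>x1. b j xb x1 * \<phi> x1 \<partial>S)"

definition badj :: "nat \<Rightarrow> 'a measure \<Rightarrow> (nat \<Rightarrow> 'a \<Rightarrow> 'a \<Rightarrow> complex) \<Rightarrow> (nat \<Rightarrow> 'a \<Rightarrow> complex) \<Rightarrow> 'a \<Rightarrow> complex" where
  "badj m S b \<psi> xb = (\<Sum>j=1..m. \<integral>x1. cnj (b j x1 xb) * \<psi> j x1 \<partial>S)"

definition gker :: "'a measure \<Rightarrow> ('a \<Rightarrow> 'a \<Rightarrow> complex) \<Rightarrow> (nat \<Rightarrow> 'a \<Rightarrow> 'a \<Rightarrow> complex)
                   \<Rightarrow> (nat \<Rightarrow> 'a \<Rightarrow> 'a \<Rightarrow> complex) \<Rightarrow> nat \<Rightarrow> nat \<Rightarrow> 'a \<Rightarrow> 'a \<Rightarrow> complex" where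
  "gker S E b ba i j xb xb' = (\<integral>x1. (\<integral>x2. b i xb x1 * E x1 x2 * cnj (ba j xb' x2) \<partial>S) \<partial>S)"

definition matop :: "nat \<Rightarrow> 'a measure \<Rightarrow> (nat \<Rightarrow> nat \<Rightarrow> 'a \<Rightarrow> 'a \<Rightarrow> complex) \<Rightarrow> (nat \<Rightarrow> 'a \<Rightarrow> complex) \<Rightarrow> nat \<Rightarrow> 'a \<Rightarrow> complex" where
  "matop m S g \<psi> i xb = (\<Sum>j=1..m. \<integral>xb'. g i j xb xb' * \<psi> j xb' \<partial>S)"

definition op_inverse_on :: "nat \<Rightarrow> 'a measure \<Rightarrow> (nat \<Rightarrow> 'a \<Rightarrow> complex) set
     \<Rightarrow> ((nat \<Rightarrow> 'a \<Rightarrow> complex) \<Rightarrow> nat \<Rightarrow> 'a \<Rightarrow> complex)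
     \<Rightarrow> ((nat \<Rightarrow> 'a \<Rightarrow> complex) \<Rightarrow> nat \<Rightarrow> 'a \<Rightarrow> complex) \<Rightarrow> bool" where
  "op_inverse_on m S F gop ginv \<longleftrightarrow>
     (\<forall>\<psi>\<in>F. gop \<psi> \<in> F \<and> ginv \<psi> \<in> F \<and>
        (\<forall>i\<in>{1..m}. \<forall>xb\<in>space S. gop (ginv \<psi>) i xb = \<psi> i xb \<and> ginv (gop \<psi>) i xb = \<psi> i xb))"

text \<open>Correction density  B^{a dagger} g^{-1} B Ebar_{x'}.\<close>
definition kcorr :: "nat \<Rightarrow> 'a measure \<Rightarrow> ('a \<Rightarrow> 'a \<Rightarrow> complex) \<Rightarrow> (nat \<Rightarrow> 'a \<Rightarrow> 'a \<Rightarrow> complex)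
     \<Rightarrow> (nat \<Rightarrow> 'a \<Rightarrow> 'a \<Rightarrow> complex) \<Rightarrow> ((nat \<Rightarrow> 'a \<Rightarrow> complex) \<Rightarrow> nat \<Rightarrow> 'a \<Rightarrow> complex) \<Rightarrow> 'a \<Rightarrow> 'a \<Rightarrow> complex" where
  "kcorr m S E b ba ginv x' = badj m S ba (ginv (bop S b (\<lambda>y. E y x')))"

definition green :: "nat \<Rightarrow> 'a measure \<Rightarrow> ('a \<Rightarrow> 'a \<Rightarrow> complex) \<Rightarrow> (nat \<Rightarrow> 'a \<Rightarrow> 'a \<Rightarrow> complex)
     \<Rightarrow> (nat \<Rightarrow> 'a \<Rightarrow> 'a \<Rightarrow> complex) \<Rightarrow> ((nat \<Rightarrow> 'a \<Rightarrow> complex) \<Rightarrow> nat \<Rightarrow> 'a \<Rightarrow> complex) \<Rightarrow> 'a \<Rightarrow> 'a \<Rightarrow> complex" where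
  "green m S E b ba ginv x x' = E x x' - (\<integral>xb. E x xb * kcorr m S E b ba ginv x' xb \<partial>S)"

definition Jphi :: "nat \<Rightarrow> 'a measure \<Rightarrow> (nat \<Rightarrow> 'a \<Rightarrow> 'a \<Rightarrow> complex)
     \<Rightarrow> ((nat \<Rightarrow> 'a \<Rightarrow> complex) \<Rightarrow> nat \<Rightarrow> 'a \<Rightarrow> complex) \<Rightarrow> (nat \<Rightarrow> 'a \<Rightarrow> complex) \<Rightarrow> 'a \<Rightarrow> complex" where
  "Jphi m S ba ginv \<Phi> = badj m S ba (ginv \<Phi>)"

definition usol :: "nat \<Rightarrow> ('a::euclidean_space) set \<Rightarrow> 'a measure \<Rightarrow> ('a \<Rightarrow> 'a \<Rightarrow> complex)
     \<Rightarrow> (nat \<Rightarrow> 'a \<Rightarrow> 'a \<Rightarrow> complex) \<Rightarrow> (nat \<Rightarrow> 'a \<Rightarrow> 'a \<Rightarrow> complex)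
     \<Rightarrow> ((nat \<Rightarrow> 'a \<Rightarrow> complex) \<Rightarrow> nat \<Rightarrow> 'a \<Rightarrow> complex) \<Rightarrow> ('a \<Rightarrow> complex) \<Rightarrow> (nat \<Rightarrow> 'a \<Rightarrow> complex) \<Rightarrow> 'a \<Rightarrow> complex" where
  "usol m \<Omega> S E b ba ginv f \<Phi> x =
     (\<integral>x1. green m S E b ba ginv x x1 * f x1 \<partial>lebesgue_on \<Omega>)
     + (\<integral>xb. E x xb * Jphi m S ba ginv \<Phi> xb \<partial>S)"

end

theory Submission imports Defs begin

text \<open>The key identity is that the single-layer potential with density \<open>B\<^sup>a\<^sup>\<dagger> \<psi>\<close> has
  boundary data \<open>g \<psi>\<close>: after unfolding the kernels both sides are the same triple integral
  over the boundary. Applied to \<open>\<psi> = g\<^sup>-\<^sup>1 B E(\<cdot>, x')\<close> it gives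
  \<open>B G(\<cdot>, x') = B E(\<cdot>, x') - g g\<^sup>-\<^sup>1 B E(\<cdot>, x') = 0\<close>, so the volume term of \<open>u\<close> has zero
  boundary data, while the boundary term has boundary data \<open>g g\<^sup>-\<^sup>1 \<Phi> = \<Phi>\<close>. In the interior,
  \<open>L\<close> annihilates \<open>E(\<cdot>, x\<^sub>b)\<close> for every boundary point \<open>x\<^sub>b\<close>, so only the volume potential
  of \<open>E\<close> contributes and \<open>L u = f\<close>.\<close>

lemma sigma_finite_lebesgue: "sigma_finite_measure (lebesgue :: 'a::euclidean_space measure)"
proof -
  obtain A :: "'a set set" where A: "countable A" "A \<subseteq> sets lborel" "\<Union>A = space lborel"
     "\<forall>a\<in>A. emeasure lborel a \<noteq> \<infinity>"
    using sigma_finite_measure.sigma_finite_countable[OF sigma_finite_lborel] by blast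
  show ?thesis
    by (rule sigma_finite_measure.intro, rule exI[of _ A]) (use A in auto)
qed

lemma sigma_finite_lebesgue_on:
  "S \<in> sets lebesgue \<Longrightarrow> sigma_finite_measure (lebesgue_on (S :: 'a::euclidean_space set))"
  by (rule sigma_finite_measure_restrict_space[OF sigma_finite_lebesgue])

lemma pair_measure_assoc:
  assumes M1: "sigma_finite_measure M1" and M2: "sigma_finite_measure M2"
    and M3: "sigma_finite_measure M3"
  shows "(M1 \<Otimes>\<^sub>M M2) \<Otimes>\<^sub>M M3
       = distr (M1 \<Otimes>\<^sub>M (M2 \<Otimes>\<^sub>M M3)) ((M1 \<Otimes>\<^sub>M M2) \<Otimes>\<^sub>M M3) (\<lambda>(x, y, z). ((x, y), z))"
    (is "_ = distr ?M123 _ ?assoc")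
proof (rule pair_measure_eqI)
  show "sigma_finite_measure (M1 \<Otimes>\<^sub>M M2)" by (rule sigma_finite_pair_measure[OF M1 M2])
  show "sigma_finite_measure M3" by fact
  show "sets ((M1 \<Otimes>\<^sub>M M2) \<Otimes>\<^sub>M M3) = sets (distr ?M123 ((M1 \<Otimes>\<^sub>M M2) \<Otimes>\<^sub>M M3) ?assoc)"
    by simp
  fix A B assume A: "A \<in> sets (M1 \<Otimes>\<^sub>M M2)" and B: "B \<in> sets M3"
  interpret M2: sigma_finite_measure M2 by fact
  interpret M3: sigma_finite_measure M3 by fact
  interpret M23: sigma_finite_measure "M2 \<Otimes>\<^sub>M M3" by (rule sigma_finite_pair_measure[OF M2 M3])
  have meas: "?assoc \<in> measurable ?M123 ((M1 \<Otimes>\<^sub>M M2) \<Otimes>\<^sub>M M3)"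
    by measurable
  let ?X = "?assoc -` (A \<times> B) \<inter> space ?M123"
  have X: "?X \<in> sets ?M123"
    using A B by (intro measurable_sets[OF meas]) auto
  have "emeasure (distr ?M123 ((M1 \<Otimes>\<^sub>M M2) \<Otimes>\<^sub>M M3) ?assoc) (A \<times> B) = emeasure ?M123 ?X"
    using meas A B by (subst emeasure_distr) auto
  also have "\<dots> = (\<integral>\<^sup>+x. emeasure (M2 \<Otimes>\<^sub>M M3) (Pair x -` ?X) \<partial>M1)"
    by (rule M23.emeasure_pair_measure_alt[OF X])
  also have "\<dots> = (\<integral>\<^sup>+x. emeasure M2 (Pair x -` A) * emeasure M3 B \<partial>M1)"
  proof (rule nn_integral_cong)
    fix x assume x: "x \<in> space M1"
    have "Pair x -` ?X = (Pair x -` A) \<times> B"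
      using x A[THEN sets.sets_into_space] B[THEN sets.sets_into_space]
      by (auto simp: space_pair_measure)
    then show "emeasure (M2 \<Otimes>\<^sub>M M3) (Pair x -` ?X) = emeasure M2 (Pair x -` A) * emeasure M3 B"
      using A B by (simp add: M3.emeasure_pair_measure_Times sets_Pair1)
  qed
  also have "\<dots> = (\<integral>\<^sup>+x. emeasure M2 (Pair x -` A) \<partial>M1) * emeasure M3 B"
    using A by (intro nn_integral_multc) (rule M2.measurable_emeasure_Pair)
  also have "\<dots> = emeasure (M1 \<Otimes>\<^sub>M M2) A * emeasure M3 B"
    using A by (simp add: M2.emeasure_pair_measure_alt)
  finally show "emeasure (M1 \<Otimes>\<^sub>M M2) A * emeasure M3 B
      = emeasure (distr ?M123 ((M1 \<Otimes>\<^sub>M M2) \<Otimes>\<^sub>M M3) ?assoc) (A \<times> B)"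
    by simp
qed

lemma integral_pair_measure_assoc:
  fixes G :: "'a \<times> 'b \<times> 'c \<Rightarrow> 'd::{banach, second_countable_topology}"
  assumes M1: "sigma_finite_measure M1" and M2: "sigma_finite_measure M2"
    and M3: "sigma_finite_measure M3"
    and G: "integrable (M1 \<Otimes>\<^sub>M M2 \<Otimes>\<^sub>M M3) G"
  shows "integrable ((M1 \<Otimes>\<^sub>M M2) \<Otimes>\<^sub>M M3) (\<lambda>p. G (fst (fst p), snd (fst p), snd p))"
    and "(\<integral>p. G (fst (fst p), snd (fst p), snd p) \<partial>((M1 \<Otimes>\<^sub>M M2) \<Otimes>\<^sub>M M3))
       = integral\<^sup>L (M1 \<Otimes>\<^sub>M M2 \<Otimes>\<^sub>M M3) G"
proof -
  let ?G' = "\<lambda>p. G (fst (fst p), snd (fst p), snd p)"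
  have [measurable]: "G \<in> borel_measurable (M1 \<Otimes>\<^sub>M M2 \<Otimes>\<^sub>M M3)" using G by auto
  have assoc[measurable]:
    "(\<lambda>(x, y, z). ((x, y), z)) \<in> measurable (M1 \<Otimes>\<^sub>M M2 \<Otimes>\<^sub>M M3) ((M1 \<Otimes>\<^sub>M M2) \<Otimes>\<^sub>M M3)"
    by measurable
  have G': "?G' \<in> borel_measurable ((M1 \<Otimes>\<^sub>M M2) \<Otimes>\<^sub>M M3)"
    by measurable
  have comp: "(\<lambda>p. ?G' ((\<lambda>(x, y, z). ((x, y), z)) p)) = G"
    by auto
  show "integrable ((M1 \<Otimes>\<^sub>M M2) \<Otimes>\<^sub>M M3) ?G'"
    by (subst pair_measure_assoc[OF M1 M2 M3], subst integrable_distr_eq[OF assoc G']) (simp add: comp G)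
  show "integral\<^sup>L ((M1 \<Otimes>\<^sub>M M2) \<Otimes>\<^sub>M M3) ?G' = integral\<^sup>L (M1 \<Otimes>\<^sub>M M2 \<Otimes>\<^sub>M M3) G"
    by (subst pair_measure_assoc[OF M1 M2 M3], subst integral_distr[OF assoc G']) (simp add: comp)
qed

lemma integral_pair_measure3_iterated:
  fixes G :: "'a \<times> 'b \<times> 'c \<Rightarrow> 'd::{banach, second_countable_topology}"
  assumes M1: "sigma_finite_measure M1" and M2: "sigma_finite_measure M2"
    and M3: "sigma_finite_measure M3"
    and G: "integrable (M1 \<Otimes>\<^sub>M M2 \<Otimes>\<^sub>M M3) G"
  shows "(\<integral>z. (\<integral>x. (\<integral>y. G (x, y, z) \<partial>M2) \<partial>M1) \<partial>M3) = integral\<^sup>L (M1 \<Otimes>\<^sub>M M2 \<Otimes>\<^sub>M M3) G"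
proof -
  interpret M12: pair_sigma_finite M1 M2 using M1 M2 by (rule pair_sigma_finite.intro)
  interpret M12_3: pair_sigma_finite "M1 \<Otimes>\<^sub>M M2" M3
    using M12.sigma_finite_measure_axioms M3 by (rule pair_sigma_finite.intro)
  define G' where "G' = (\<lambda>p. G (fst (fst p), snd (fst p), snd p))"
  note G' = integral_pair_measure_assoc[OF M1 M2 M3 G, folded G'_def]
  have [measurable]: "G \<in> borel_measurable (M1 \<Otimes>\<^sub>M M2 \<Otimes>\<^sub>M M3)" using G by auto
  have [measurable]: "G' \<in> borel_measurable ((M1 \<Otimes>\<^sub>M M2) \<Otimes>\<^sub>M M3)" using G'(1) by auto
  have "AE z in M3. integrable (M1 \<Otimes>\<^sub>M M2) (\<lambda>p. G' (p, z))"
    using M12_3.AE_integrable_snd[of "\<lambda>p z. G' (p, z)"] G'(1) by simp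
  then have "AE z in M3. (\<integral>x. (\<integral>y. G (x, y, z) \<partial>M2) \<partial>M1) = (\<integral>p. G' (p, z) \<partial>(M1 \<Otimes>\<^sub>M M2))"
    by eventually_elim (simp add: M12.integral_fst'[symmetric] G'_def)
  then have "(\<integral>z. (\<integral>x. (\<integral>y. G (x, y, z) \<partial>M2) \<partial>M1) \<partial>M3) = (\<integral>z. (\<integral>p. G' (p, z) \<partial>(M1 \<Otimes>\<^sub>M M2)) \<partial>M3)"
    by (rule integral_cong_AE[rotated 2]) (measurable, measurable)
  also have "\<dots> = integral\<^sup>L ((M1 \<Otimes>\<^sub>M M2) \<Otimes>\<^sub>M M3) G'"
    using M12_3.integral_snd[of "\<lambda>p z. G' (p, z)"] G'(1) by simp
  finally show ?thesis using G'(2) by simp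
qed


lemma bop_single_layer_badj:
  fixes E :: "'a \<Rightarrow> 'a \<Rightarrow> complex" and b ba :: "nat \<Rightarrow> 'a \<Rightarrow> 'a \<Rightarrow> complex"
    and \<psi> :: "nat \<Rightarrow> 'a \<Rightarrow> complex"
  assumes S: "sigma_finite_measure S"
    and triple: "\<And>k. k \<in> {1..m} \<Longrightarrow> integrable (S \<Otimes>\<^sub>M S \<Otimes>\<^sub>M S)
                   (\<lambda>(x1, y, x2). b j xb x1 * E x1 y * cnj (ba k x2 y) * \<psi> k x2)"
    and layer: "integrable S (\<lambda>x1. b j xb x1 * (\<integral>y. E x1 y * badj m S ba \<psi> y \<partial>S))"
  shows "bop S b (\<lambda>x1. \<integral>y. E x1 y * badj m S ba \<psi> y \<partial>S) j xb = matop m S (gker S E b ba) \<psi> j xb"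
proof -
  interpret S: sigma_finite_measure S by fact
  interpret SS: pair_sigma_finite S S ..
  interpret S_SS: pair_sigma_finite S "S \<Otimes>\<^sub>M S"
    using S sigma_finite_pair_measure[OF S S] by (rule pair_sigma_finite.intro)
  define T where "T k = (\<lambda>(x1, y, x2). b j xb x1 * E x1 y * cnj (ba k x2 y) * \<psi> k x2)" for k
  have T: "integrable (S \<Otimes>\<^sub>M S \<Otimes>\<^sub>M S) (T k)" if "k \<in> {1..m}" for k
    using triple that by (simp add: T_def)
  have AE_T: "AE x1 in S. \<forall>k\<in>{1..m}. integrable (S \<Otimes>\<^sub>M S) (\<lambda>p. T k (x1, p))"
    by (rule AE_finite_allI) (auto intro: S_SS.AE_integrable_fst'[OF T])
  have "bop S b (\<lambda>x1. \<integral>y. E x1 y * badj m S ba \<psi> y \<partial>S) j xb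
      = (\<integral>x1. (\<Sum>k=1..m. \<integral>p. T k (x1, p) \<partial>(S \<Otimes>\<^sub>M S)) \<partial>S)"
    unfolding bop_def
  proof (rule integral_cong_AE)
    show "(\<lambda>x1. b j xb x1 * (\<integral>y. E x1 y * badj m S ba \<psi> y \<partial>S)) \<in> borel_measurable S"
      using layer by auto
    show "(\<lambda>x1. \<Sum>k=1..m. \<integral>p. T k (x1, p) \<partial>(S \<Otimes>\<^sub>M S)) \<in> borel_measurable S"
      using S_SS.integrable_fst'[OF T] by (intro borel_measurable_sum) auto
    show "AE x1 in S. b j xb x1 * (\<integral>y. E x1 y * badj m S ba \<psi> y \<partial>S)
                    = (\<Sum>k=1..m. \<integral>p. T k (x1, p) \<partial>(S \<Otimes>\<^sub>M S))"
      using AE_T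
    proof eventually_elim
      case (elim x1)
      then have T_x1: "integrable (S \<Otimes>\<^sub>M S) (\<lambda>p. T k (x1, p))" if "k \<in> {1..m}" for k
        using that by blast
      have "b j xb x1 * (E x1 y * badj m S ba \<psi> y) = (\<Sum>k=1..m. \<integral>x2. T k (x1, y, x2) \<partial>S)" for y
        by (simp add: badj_def T_def sum_distrib_left mult.assoc)
      then have "b j xb x1 * (\<integral>y. E x1 y * badj m S ba \<psi> y \<partial>S)
          = (\<integral>y. (\<Sum>k=1..m. \<integral>x2. T k (x1, y, x2) \<partial>S) \<partial>S)"
        by (simp flip: integral_mult_right_zero)
      also have "\<dots> = (\<Sum>k=1..m. \<integral>y. (\<integral>x2. T k (x1, y, x2) \<partial>S) \<partial>S)"
        using SS.integrable_fst'[OF T_x1] by (intro Bochner_Integration.integral_sum) simp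
      also have "\<dots> = (\<Sum>k=1..m. \<integral>p. T k (x1, p) \<partial>(S \<Otimes>\<^sub>M S))"
        using SS.integral_fst'[OF T_x1] by (intro sum.cong) simp_all
      finally show ?case .
    qed
  qed
  also have "\<dots> = (\<Sum>k=1..m. \<integral>x1. (\<integral>p. T k (x1, p) \<partial>(S \<Otimes>\<^sub>M S)) \<partial>S)"
    using S_SS.integrable_fst'[OF T] by (intro Bochner_Integration.integral_sum) simp
  also have "\<dots> = (\<Sum>k=1..m. integral\<^sup>L (S \<Otimes>\<^sub>M S \<Otimes>\<^sub>M S) (T k))"
    using S_SS.integral_fst'[OF T] by (intro sum.cong) simp_all
  also have "\<dots> = (\<Sum>k=1..m. \<integral>x2. (\<integral>x1. (\<integral>y. T k (x1, y, x2) \<partial>S) \<partial>S) \<partial>S)"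
    using integral_pair_measure3_iterated[OF S S S T] by simp
  also have "\<dots> = matop m S (gker S E b ba) \<psi> j xb"
    by (simp add: matop_def gker_def T_def)
  finally show ?thesis .
qed


lemma bop_single_layer_badj_ginv:
  assumes S: "sigma_finite_measure S"
    and g_inv: "op_inverse_on m S F (matop m S (gker S E b ba)) ginv"
    and \<psi>: "\<psi> \<in> F" and j: "j \<in> {1..m}" and xb: "xb \<in> space S"
    and triple: "\<And>k. k \<in> {1..m} \<Longrightarrow> integrable (S \<Otimes>\<^sub>M S \<Otimes>\<^sub>M S)
                   (\<lambda>(x1, y, x2). b j xb x1 * E x1 y * cnj (ba k x2 y) * ginv \<psi> k x2)"
    and layer: "integrable S (\<lambda>x1. b j xb x1 * (\<integral>y. E x1 y * badj m S ba (ginv \<psi>) y \<partial>S))"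
  shows "bop S b (\<lambda>x1. \<integral>y. E x1 y * badj m S ba (ginv \<psi>) y \<partial>S) j xb = \<psi> j xb"
proof -
  have "bop S b (\<lambda>x1. \<integral>y. E x1 y * badj m S ba (ginv \<psi>) y \<partial>S) j xb
      = matop m S (gker S E b ba) (ginv \<psi>) j xb"
    by (rule bop_single_layer_badj[OF S]) (fact triple layer)+
  with g_inv \<psi> j xb show ?thesis by (simp add: op_inverse_on_def)
qed

lemma bop_green_eq_0:
  assumes S: "sigma_finite_measure S"
    and g_inv: "op_inverse_on m S F (matop m S (gker S E b ba)) ginv"
    and BE: "bop S b (\<lambda>y. E y x') \<in> F" and j: "j \<in> {1..m}" and xb: "xb \<in> space S"
    and triple: "\<And>k. k \<in> {1..m} \<Longrightarrow> integrable (S \<Otimes>\<^sub>M S \<Otimes>\<^sub>M S)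
           (\<lambda>(x1, y, x2). b j xb x1 * E x1 y * cnj (ba k x2 y) * ginv (bop S b (\<lambda>y. E y x')) k x2)"
    and int_E: "integrable S (\<lambda>x1. b j xb x1 * E x1 x')"
    and int_corr: "integrable S (\<lambda>x1. b j xb x1 * (\<integral>y. E x1 y * kcorr m S E b ba ginv x' y \<partial>S))"
  shows "bop S b (\<lambda>x1. green m S E b ba ginv x1 x') j xb = 0"
proof -
  let ?\<psi> = "bop S b (\<lambda>y. E y x')"
  have corr: "kcorr m S E b ba ginv x' = badj m S ba (ginv ?\<psi>)"
    by (simp add: kcorr_def)
  have "bop S b (\<lambda>x1. green m S E b ba ginv x1 x') j xb
      = (\<integral>x1. b j xb x1 * E x1 x' \<partial>S)
        - (\<integral>x1. b j xb x1 * (\<integral>y. E x1 y * kcorr m S E b ba ginv x' y \<partial>S) \<partial>S)"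
    unfolding bop_def green_def right_diff_distrib using int_E int_corr
    by (rule Bochner_Integration.integral_diff)
  also have "(\<integral>x1. b j xb x1 * E x1 x' \<partial>S) = ?\<psi> j xb"
    by (simp add: bop_def)
  also have "(\<integral>x1. b j xb x1 * (\<integral>y. E x1 y * kcorr m S E b ba ginv x' y \<partial>S) \<partial>S) = ?\<psi> j xb"
    using bop_single_layer_badj_ginv[OF S g_inv BE j xb triple int_corr[unfolded corr]]
    unfolding corr bop_def .
  finally show ?thesis by simp
qed

lemma lin_diff_op_diff_add:
  assumes L: "lin_diff_op \<Omega> D L" and "open \<Omega>" and x: "x \<in> \<Omega>"
    and D: "A \<in> D" "B \<in> D" "C \<in> D"
    and u: "\<And>y. y \<in> \<Omega> \<Longrightarrow> u y = A y - B y + C y"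
  shows "L u x = L A x - L B x + L C x"
proof -
  note L = L[unfolded lin_diff_op_def]
  have scale: "(\<lambda>y. c * \<phi> y) \<in> D \<and> L (\<lambda>y. c * \<phi> y) x = c * L \<phi> x" if "\<phi> \<in> D" for c \<phi>
    using L x that by blast
  have add: "(\<lambda>y. \<phi> y + \<psi> y) \<in> D \<and> L (\<lambda>y. \<phi> y + \<psi> y) x = L \<phi> x + L \<psi> x"
    if "\<phi> \<in> D" "\<psi> \<in> D" for \<phi> \<psi>
    using L x that by blast
  have local: "L \<phi> x = L \<psi> x" if "\<forall>\<^sub>F y in nhds x. \<phi> y = \<psi> y" for \<phi> \<psi>
    using L x that by blast
  have "\<forall>\<^sub>F y in nhds x. u y = A y + (-1) * B y + C y"
    using eventually_nhds_in_open[OF \<open>open \<Omega>\<close> x] by eventually_elim (simp add: u)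
  then have "L u x = L (\<lambda>y. A y + (-1) * B y + C y) x"
    by (rule local)
  also have "\<dots> = L A x + (-1) * L B x + L C x"
    using add scale D by metis
  finally show ?thesis by simp
qed


lemma bop_volume_potential_eq_0:
  assumes "sigma_finite_measure S" "sigma_finite_measure M"
    and int: "integrable (S \<Otimes>\<^sub>M M) (\<lambda>(x1, x'). b j xb x1 * K x1 x' * f x')"
    and K: "\<And>x'. x' \<in> space M \<Longrightarrow> bop S b (\<lambda>x1. K x1 x') j xb = 0"
  shows "bop S b (\<lambda>x1. \<integral>x'. K x1 x' * f x' \<partial>M) j xb = 0"
proof -
  interpret SM: pair_sigma_finite S M using assms(1,2) by (rule pair_sigma_finite.intro)
  have "bop S b (\<lambda>x1. \<integral>x'. K x1 x' * f x' \<partial>M) j xb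
      = (\<integral>x1. (\<integral>x'. b j xb x1 * K x1 x' * f x' \<partial>M) \<partial>S)"
    by (simp add: bop_def mult.assoc)
  also have "\<dots> = (\<integral>x'. bop S b (\<lambda>x1. K x1 x') j xb * f x' \<partial>M)"
    using SM.Fubini_integral[of "\<lambda>x1 x'. b j xb x1 * K x1 x' * f x'"] int
    by (simp add: bop_def)
  also have "\<dots> = 0"
    using K by (simp cong: Bochner_Integration.integral_cong)
  finally show ?thesis .
qed


theorem mainTheorem5:
  fixes \<Omega> :: "(real ^ 'n) set"
    and S :: "(real ^ 'n) measure"
    and L :: "((real ^ 'n) \<Rightarrow> complex) \<Rightarrow> ((real ^ 'n) \<Rightarrow> complex)"
    and D :: "((real ^ 'n) \<Rightarrow> complex) set"
    and E :: "real ^ 'n \<Rightarrow> real ^ 'n \<Rightarrow> complex"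
    and m :: nat
    and b ba :: "nat \<Rightarrow> real ^ 'n \<Rightarrow> real ^ 'n \<Rightarrow> complex"
    and F :: "(nat \<Rightarrow> real ^ 'n \<Rightarrow> complex) set"
    and ginv :: "(nat \<Rightarrow> real ^ 'n \<Rightarrow> complex) \<Rightarrow> nat \<Rightarrow> real ^ 'n \<Rightarrow> complex"
    and f :: "real ^ 'n \<Rightarrow> complex"
    and \<Phi> :: "nat \<Rightarrow> real ^ 'n \<Rightarrow> complex"
  assumes domain: "open \<Omega>" "connected \<Omega>" "\<Omega> \<noteq> {}"
    and surface: "sigma_finite_measure S" "space S = frontier \<Omega>"
    and Lop: "lin_diff_op \<Omega> D L"
    and fund_offdiag: "\<forall>x x'. x \<noteq> x' \<longrightarrow> L (\<lambda>y. E y x') x = 0"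
    and fund_delta: "\<forall>x\<in>\<Omega>. L (\<lambda>y. \<integral>x1. E y x1 * f x1 \<partial>lebesgue_on \<Omega>) x = f x"
    and f_smooth: "smooth_fun_on \<Omega> f"
    and g_inv: "op_inverse_on m S F (matop m S (gker S E b ba)) ginv"
    and Phi_F: "\<Phi> \<in> F"
    and BE_F: "\<forall>x'\<in>\<Omega>. bop S b (\<lambda>y. E y x') \<in> F"
    (* standing assumptions: convergence of the integrals in the interior *)
    and int_int: "\<forall>y\<in>\<Omega>. integrable (lebesgue_on \<Omega>) (\<lambda>x1. E y x1 * f x1)
        \<and> integrable (lebesgue_on \<Omega>) (\<lambda>x1. (\<integral>xb. E y xb * kcorr m S E b ba ginv x1 xb \<partial>S) * f x1)"
    (* standing assumptions: L may be applied to / under the integral signs at interior points *)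
    and dom1: "(\<lambda>y. \<integral>x1. E y x1 * f x1 \<partial>lebesgue_on \<Omega>) \<in> D"
    and dom2: "(\<lambda>y. \<integral>x1. (\<integral>xb. E y xb * kcorr m S E b ba ginv x1 xb \<partial>S) * f x1 \<partial>lebesgue_on \<Omega>) \<in> D"
    and dom3: "(\<lambda>y. \<integral>xb. E y xb * Jphi m S ba ginv \<Phi> xb \<partial>S) \<in> D"
    and under1: "\<forall>x\<in>\<Omega>.
        L (\<lambda>y. \<integral>x1. (\<integral>xb. E y xb * kcorr m S E b ba ginv x1 xb \<partial>S) * f x1 \<partial>lebesgue_on \<Omega>) x
        = (\<integral>x1. (\<integral>xb. L (\<lambda>y. E y xb) x * kcorr m S E b ba ginv x1 xb \<partial>S) * f x1 \<partial>lebesgue_on \<Omega>)"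
    and under2: "\<forall>x\<in>\<Omega>.
        L (\<lambda>y. \<integral>xb. E y xb * Jphi m S ba ginv \<Phi> xb \<partial>S) x
        = (\<integral>xb. L (\<lambda>y. E y xb) x * Jphi m S ba ginv \<Phi> xb \<partial>S)"
    (* standing assumptions: convergence / interchangeability of the integrals on the boundary *)
    and bd_int: "\<forall>j\<in>{1..m}. \<forall>xb\<in>frontier \<Omega>.
        integrable S (\<lambda>x1. b j xb x1 * (\<integral>x'. green m S E b ba ginv x1 x' * f x' \<partial>lebesgue_on \<Omega>))
      \<and> integrable S (\<lambda>x1. b j xb x1 * (\<integral>y. E x1 y * Jphi m S ba ginv \<Phi> y \<partial>S))
      \<and> integrable (S \<Otimes>\<^sub>M lebesgue_on \<Omega>) (\<lambda>(x1, x'). b j xb x1 * green m S E b ba ginv x1 x' * f x')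
      \<and> (\<forall>x'\<in>\<Omega>. integrable S (\<lambda>x1. b j xb x1 * E x1 x')
           \<and> integrable S (\<lambda>x1. b j xb x1 * (\<integral>y. E x1 y * kcorr m S E b ba ginv x' y \<partial>S)))
      \<and> (\<forall>k\<in>{1..m}. \<forall>\<psi>\<in>insert (ginv \<Phi>) ((\<lambda>x'. ginv (bop S b (\<lambda>y. E y x'))) ` \<Omega>).
           integrable (S \<Otimes>\<^sub>M S \<Otimes>\<^sub>M S)
             (\<lambda>(x1, y, x2). b j xb x1 * E x1 y * cnj (ba k x2 y) * \<psi> k x2))"
  shows "(\<forall>x\<in>\<Omega>. L (usol m \<Omega> S E b ba ginv f \<Phi>) x = f x)
       \<and> (\<forall>j\<in>{1..m}. \<forall>xb\<in>frontier \<Omega>. bop S b (usol m \<Omega> S E b ba ginv f \<Phi>) j xb = \<Phi> j xb)"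
proof -
  have S: "sigma_finite_measure S" by (fact surface(1))
  have L_E_0: "L (\<lambda>y. E y xb) x = 0" if "x \<in> \<Omega>" "xb \<in> space S" for x xb
    using fund_offdiag[rule_format, of x xb] that surface(2) domain(1)
    by (auto simp: frontier_def interior_open)
  define A where "A = (\<lambda>y. \<integral>x1. E y x1 * f x1 \<partial>lebesgue_on \<Omega>)"
  define B where "B = (\<lambda>y. \<integral>x1. (\<integral>xb. E y xb * kcorr m S E b ba ginv x1 xb \<partial>S) * f x1 \<partial>lebesgue_on \<Omega>)"
  define C where "C = (\<lambda>y. \<integral>xb. E y xb * Jphi m S ba ginv \<Phi> xb \<partial>S)"
  have u: "usol m \<Omega> S E b ba ginv f \<Phi> y = A y - B y + C y" if "y \<in> \<Omega>" for y
    using int_int that unfolding usol_def green_def A_def B_def C_def left_diff_distrib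
    by (subst Bochner_Integration.integral_diff) auto
  have "L (usol m \<Omega> S E b ba ginv f \<Phi>) x = f x" if x: "x \<in> \<Omega>" for x
    using lin_diff_op_diff_add[OF Lop domain(1) x dom1[folded A_def] dom2[folded B_def] dom3[folded C_def] u]
      fund_delta under1 under2 x L_E_0
    by (simp add: A_def B_def C_def cong: Bochner_Integration.integral_cong)
  moreover have "bop S b (usol m \<Omega> S E b ba ginv f \<Phi>) j xb = \<Phi> j xb"
    if j: "j \<in> {1..m}" and xb: "xb \<in> frontier \<Omega>" for j xb
  proof -
    note int = bd_int[rule_format, OF j xb]
    have xbS: "xb \<in> space S" using xb surface(2) by simp
    have "bop S b (\<lambda>x1. green m S E b ba ginv x1 x') j xb = 0" if x': "x' \<in> \<Omega>" for x'
      using int x' BE_F by (intro bop_green_eq_0[OF S g_inv _ j xbS]) auto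
    then have "bop S b (\<lambda>x1. \<integral>x'. green m S E b ba ginv x1 x' * f x' \<partial>lebesgue_on \<Omega>) j xb = 0"
      using int domain(1)
      by (intro bop_volume_potential_eq_0[OF S sigma_finite_lebesgue_on]) (auto simp: borel_open)
    moreover have "bop S b (\<lambda>x1. \<integral>y. E x1 y * Jphi m S ba ginv \<Phi> y \<partial>S) j xb = \<Phi> j xb"
      using int unfolding Jphi_def by (intro bop_single_layer_badj_ginv[OF S g_inv Phi_F j xbS]) auto
    ultimately show ?thesis
      using int unfolding bop_def usol_def distrib_left by (subst Bochner_Integration.integral_add) auto
  qed
  ultimately show ?thesis by blast
qed

end
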